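(* Let $\{X_t\}_{t\in\mathbb N^+}$ be a real-valued process adapted to a filtration $\{\mathcal F_t\}_{t\in\mathbb N}$ with $\mathcal F_0$ trivial, such that for all $t\in\mathbb N^+$, $\mathbb E[X_t\mid\mathcal F_{t-1}]=\mu$ (an unknown constant) and $\mathbb E[(X_t-\mu)^2\mid\mathcal F_{t-1}]\le\sigma^2$ ($\sigma^2$ known). Let $\alpha\in(0,1)$ and let $\{\lambda_t\}_{t\in\mathbb N^+}$ be any predictable process. Writing each $\sum$ for $\sum_{i=1}^t$, define $$U_t^\pm=\frac{\sum\lambda_i^2X_i}{3}\mp\sum\lambda_i,$$ $$D_t^\pm=(U_t^\pm)^2-\frac{2\sum\lambda_i^2}{3}\left(\log(2/\alpha)\mp\sum\lambda_iX_i+\frac{\sum\lambda_i^2X_i^2+2\sigma^2\sum\lambda_i^2}{6}\right),$$ $$\mathrm{aCI}^{\mathsf{SN}\pm}_t=\left(\frac{U_t^\pm-\sqrt{D_t^\pm}}{\sum\lambda_i^2/3},\ \frac{U_t^\pm+\sqrt{D_t^\pm}}{\sum\lambda_i^2/3}\right)$$ (upper signs for "$+$", lower signs for "$-$"; an interval is taken to be empty when the corresponding $D_t^\pm<0$). Let $\mathrm{CI}^{\mathsf{SN}}_t=\mathbb R\setminus\left(\mathrm{aCI}^{\mathsf{SN}+}_t\cup\mathrm{aCI}^{\mathsf{SN}-}_t\right)$. Then $\Pr[\forall t\in\mathbb N^+,\ \mu\in\mathrm{CI}^{\mathsf{SN}}_t]\ge1-\alpha$.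
   Context: A process $\{\lambda_t\}$ is predictable if each $\lambda_t$ is $\mathcal F_{t-1}$-measurable. *)

theory Defs
  imports "HOL-Probability.Probability"
begin

text \<open>Sign convention: s = 1 gives the "+" quantities, s = -1 the "-" quantities.
  All sums run over i = 1..t.\<close>

definition U_SN :: "real \<Rightarrow> (nat \<Rightarrow> real) \<Rightarrow> (nat \<Rightarrow> real) \<Rightarrow> nat \<Rightarrow> real" where
  "U_SN s lm x t = (\<Sum>i=1..t. (lm i)\<^sup>2 * x i) / 3 - s * (\<Sum>i=1..t. lm i)"

definition D_SN :: "real \<Rightarrow> real \<Rightarrow> real \<Rightarrow> (nat \<Rightarrow> real) \<Rightarrow> (nat \<Rightarrow> real) \<Rightarrow> nat \<Rightarrow> real" where
  "D_SN a sg s lm x t =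
     (U_SN s lm x t)\<^sup>2
     - 2 * (\<Sum>i=1..t. (lm i)\<^sup>2) / 3 *
       (ln (2 / a) - s * (\<Sum>i=1..t. lm i * x i)
        + ((\<Sum>i=1..t. (lm i)\<^sup>2 * (x i)\<^sup>2) + 2 * sg\<^sup>2 * (\<Sum>i=1..t. (lm i)\<^sup>2)) / 6)"

definition aCI_SN :: "real \<Rightarrow> real \<Rightarrow> real \<Rightarrow> (nat \<Rightarrow> real) \<Rightarrow> (nat \<Rightarrow> real) \<Rightarrow> nat \<Rightarrow> real set" where
  "aCI_SN a sg s lm x t =
     (if D_SN a sg s lm x t < 0 then {}
      else {(U_SN s lm x t - sqrt (D_SN a sg s lm x t)) / ((\<Sum>i=1..t. (lm i)\<^sup>2) / 3)
            <..< (U_SN s lm x t + sqrt (D_SN a sg s lm x t)) / ((\<Sum>i=1..t. (lm i)\<^sup>2) / 3)})"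

definition CI_SN :: "real \<Rightarrow> real \<Rightarrow> (nat \<Rightarrow> real) \<Rightarrow> (nat \<Rightarrow> real) \<Rightarrow> nat \<Rightarrow> real set" where
  "CI_SN a sg lm x t = UNIV - (aCI_SN a sg 1 lm x t \<union> aCI_SN a sg (-1) lm x t)"

end

theory Submission
  imports Defs
begin

text \<open>Fix a sign \<open>s = \<plusminus>1\<close> and let \<open>S\<^sub>t\<close> (\<open>sn_sum\<close>) be the sum over \<open>i = 1..t\<close> of
  \<open>s \<lambda>\<^sub>i (X\<^sub>i - \<mu>) - \<lambda>\<^sub>i\<^sup>2 ((X\<^sub>i - \<mu>)\<^sup>2 + 2 \<sigma>\<^sup>2) / 6\<close>. Since \<open>exp (x - x\<^sup>2 / 6) \<le> 1 + x + x\<^sup>2 / 3\<close>,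
  the conditional mean and variance assumptions give
  \<open>E[exp (S\<^sub>t\<^sub>+\<^sub>1 - S\<^sub>t) | F\<^sub>t] \<le> (1 + \<lambda>\<^sup>2 \<sigma>\<^sup>2 / 3) exp (- \<lambda>\<^sup>2 \<sigma>\<^sup>2 / 3) \<le> 1\<close> with \<open>\<lambda> = \<lambda>\<^sub>t\<^sub>+\<^sub>1\<close>, so
  \<open>exp S\<^sub>t\<close> is a nonnegative supermartingale starting at 1 and, by Ville's inequality, exceeds
  \<open>2 / \<alpha>\<close> at some time with probability at most \<open>\<alpha> / 2\<close>. Completing the square in the
  definition of \<open>aCI\<^sup>\<plusminus>\<^sub>t\<close> shows that \<open>\<mu> \<in> aCI\<^sup>\<plusminus>\<^sub>t\<close> forces \<open>S\<^sub>t > ln (2 / \<alpha>)\<close> for the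
  corresponding sign; a union bound over the two signs gives the theorem.\<close>

lemma exp_le_one_plus_quadratic:
  fixes x :: real
  shows "exp (x - x\<^sup>2 / 6) \<le> 1 + x + x\<^sup>2 / 3"
proof -
  define g where "g y = (1 + y + y\<^sup>2 / 3) * exp (y\<^sup>2 / 6 - y)" for y :: real
  define g' where "g' y = y ^ 3 / 9 * exp (y\<^sup>2 / 6 - y)" for y :: real
  have g_deriv: "(g has_real_derivative g' y) (at y)" for y
  proof -
    have "(g has_real_derivative
        (1 + 2 * y / 3) * exp (y\<^sup>2 / 6 - y) + (1 + y + y\<^sup>2 / 3) * (exp (y\<^sup>2 / 6 - y) * (2 * y / 6 - 1))) (at y)"
      unfolding g_def by (auto intro!: derivative_eq_intros simp: power2_eq_square)
    moreover have "(1 + 2 * y / 3) * exp (y\<^sup>2 / 6 - y) + (1 + y + y\<^sup>2 / 3) * (exp (y\<^sup>2 / 6 - y) * (2 * y / 6 - 1))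
        = g' y"
      unfolding g'_def by (simp add: algebra_simps power2_eq_square power3_eq_cube add_divide_distrib)
    ultimately show ?thesis by metis
  qed
  have "g 0 \<le> g x"
  proof (cases "0 \<le> x")
    case True
    have "0 \<le> g' y" if "0 \<le> y" for y
      using that by (simp add: g'_def)
    then show ?thesis
      using True g_deriv by (metis DERIV_nonneg_imp_nondecreasing)
  next
    case False
    have "g' y \<le> 0" if "y \<le> 0" for y
      using that by (simp add: g'_def mult_nonpos_nonneg power_le_zero_eq)
    then show ?thesis
      using False g_deriv by (metis DERIV_nonpos_imp_nonincreasing linear)
  qed
  then have "exp (x - x\<^sup>2 / 6) * 1 \<le> exp (x - x\<^sup>2 / 6) * g x"
    by (simp add: g_def)
  also have "\<dots> = 1 + x + x\<^sup>2 / 3"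
    by (simp add: g_def mult.left_commute flip: exp_add)
  finally show ?thesis by simp
qed

lemma one_plus_quadratic_pos:
  fixes y :: real
  shows "0 < 1 + y + y\<^sup>2 / 3"
proof -
  have "1 + y + y\<^sup>2 / 3 = (y + 3 / 2)\<^sup>2 / 3 + 1 / 4"
    by (simp add: power2_eq_square field_simps)
  then show ?thesis
    by (metis add_nonneg_pos divide_nonneg_pos zero_le_power2 zero_less_divide_1_iff zero_less_numeral)
qed

lemma exp_neg_mult_one_plus_le_1:
  fixes a :: real
  shows "exp (- a) * (1 + a) \<le> 1"
proof -
  have "exp (- a) * (1 + a) \<le> exp (- a) * exp a"
    by (intro mult_left_mono exp_ge_add_one_self) simp
  then show ?thesis
    by (simp flip: exp_add)
qed

lemma power2_mult_abs_one:
  fixes s a :: real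
  assumes "\<bar>s\<bar> = 1"
  shows "(s * a)\<^sup>2 = a\<^sup>2"
proof -
  have "s\<^sup>2 = 1"
    using assms by (metis power2_abs one_power2)
  then show ?thesis
    by (simp add: power_mult_distrib)
qed

section \<open>Nonnegative supermartingales and Ville's inequality\<close>

lemma measurable_filtration_mono:
  assumes subalg: "\<And>n. subalgebra M (F n)" and "sets (F m) \<subseteq> sets (F n)"
    and "f \<in> measurable (F m) N"
  shows "f \<in> measurable (F n) N"
proof (rule measurable_from_subalg[OF _ assms(3)])
  show "subalgebra (F n) (F m)"
    using assms(2) subalg[of m] subalg[of n] by (simp add: subalgebra_def)
qed

definition nn_supermartingale :: "'a measure \<Rightarrow> (nat \<Rightarrow> 'a measure) \<Rightarrow> (nat \<Rightarrow> 'a \<Rightarrow> ennreal) \<Rightarrow> bool" where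
  "nn_supermartingale M F Z \<longleftrightarrow>
     (\<forall>n. Z n \<in> borel_measurable (F n)) \<and>
     (\<forall>n. \<forall>A\<in>sets (F n). (\<integral>\<^sup>+\<omega>\<in>A. Z (Suc n) \<omega> \<partial>M) \<le> (\<integral>\<^sup>+\<omega>\<in>A. Z n \<omega> \<partial>M))"

context
  fixes M :: "'a measure" and F :: "nat \<Rightarrow> 'a measure" and Z :: "nat \<Rightarrow> 'a \<Rightarrow> ennreal"
  assumes subalg: "\<And>n. subalgebra M (F n)"
    and filt: "\<And>m n. m \<le> n \<Longrightarrow> sets (F m) \<subseteq> sets (F n)"
    and Z: "nn_supermartingale M F Z"
begin

lemma sets_crossing_until:
  "{\<omega> \<in> space M. \<exists>t\<le>n. c \<le> Z t \<omega>} \<in> sets (F n)"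
proof -
  have "{\<omega> \<in> space M. \<exists>t\<le>n. c \<le> Z t \<omega>} = (\<Union>t\<in>{..n}. {\<omega> \<in> space (F n). c \<le> Z t \<omega>})"
    using subalg by (auto simp: subalgebra_def)
  also have "\<dots> \<in> sets (F n)"
  proof (intro sets.finite_UN)
    fix t assume "t \<in> {..n}"
    then have [measurable]: "Z t \<in> borel_measurable (F n)"
      using Z by (intro measurable_filtration_mono[OF subalg filt]) (auto simp: nn_supermartingale_def)
    show "{\<omega> \<in> space (F n). c \<le> Z t \<omega>} \<in> sets (F n)"
      by measurable
  qed simp
  finally show ?thesis .
qed

lemma borel_measurable_nn_supermartingale [measurable]: "Z n \<in> borel_measurable M"
  using Z measurable_from_subalg[OF subalg] by (auto simp: nn_supermartingale_def)

lemma nn_integral_stopped_at_crossing_Suc_le: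
  "(\<integral>\<^sup>+\<omega>. (if \<exists>t\<le>Suc n. c \<le> Z t \<omega> then c else Z (Suc n) \<omega>) \<partial>M)
     \<le> (\<integral>\<^sup>+\<omega>. (if \<exists>t\<le>n. c \<le> Z t \<omega> then c else Z n \<omega>) \<partial>M)"
proof -
  define G where "G = {\<omega> \<in> space M. \<exists>t\<le>n. c \<le> Z t \<omega>}"
  have G_F: "G \<in> sets (F n)"
    unfolding G_def by (rule sets_crossing_until)
  have [measurable]: "G \<in> sets M"
    using G_F subalg by (auto simp: subalgebra_def)
  have compl_F: "space M - G \<in> sets (F n)"
    using sets.compl_sets[OF G_F] subalg by (simp add: subalgebra_def)
  have "(\<integral>\<^sup>+\<omega>. (if \<exists>t\<le>Suc n. c \<le> Z t \<omega> then c else Z (Suc n) \<omega>) \<partial>M)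
      \<le> (\<integral>\<^sup>+\<omega>. c * indicator G \<omega> + Z (Suc n) \<omega> * indicator (space M - G) \<omega> \<partial>M)"
    by (intro nn_integral_mono) (auto simp: G_def le_Suc_eq indicator_def)
  also have "\<dots> = c * emeasure M G + (\<integral>\<^sup>+\<omega>\<in>space M - G. Z (Suc n) \<omega> \<partial>M)"
    by (subst nn_integral_add) (simp_all add: nn_integral_cmult_indicator)
  also have "\<dots> \<le> c * emeasure M G + (\<integral>\<^sup>+\<omega>\<in>space M - G. Z n \<omega> \<partial>M)"
    using Z compl_F by (intro add_left_mono) (simp add: nn_supermartingale_def)
  also have "\<dots> = (\<integral>\<^sup>+\<omega>. c * indicator G \<omega> + Z n \<omega> * indicator (space M - G) \<omega> \<partial>M)"
    by (subst nn_integral_add) (simp_all add: nn_integral_cmult_indicator)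
  also have "\<dots> = (\<integral>\<^sup>+\<omega>. (if \<exists>t\<le>n. c \<le> Z t \<omega> then c else Z n \<omega>) \<partial>M)"
    by (intro nn_integral_cong) (simp add: G_def indicator_def)
  finally show ?thesis .
qed

lemma nn_integral_stopped_at_crossing_le:
  "(\<integral>\<^sup>+\<omega>. (if \<exists>t\<le>n. c \<le> Z t \<omega> then c else Z n \<omega>) \<partial>M) \<le> (\<integral>\<^sup>+\<omega>. Z 0 \<omega> \<partial>M)"
proof (induction n)
  case 0
  show ?case
    by (intro nn_integral_mono) simp
next
  case (Suc n)
  with nn_integral_stopped_at_crossing_Suc_le show ?case
    by (rule order_trans)
qed

lemma ville_inequality:
  "c * emeasure M {\<omega> \<in> space M. \<exists>n. c \<le> Z n \<omega>} \<le> (\<integral>\<^sup>+\<omega>. Z 0 \<omega> \<partial>M)"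
proof -
  define G where "G n = {\<omega> \<in> space M. \<exists>t\<le>n. c \<le> Z t \<omega>}" for n
  have G_M: "G n \<in> sets M" for n
    using sets_crossing_until[of n c] subalg[of n] unfolding G_def subalgebra_def by blast
  have "c * emeasure M (G n) \<le> (\<integral>\<^sup>+\<omega>. Z 0 \<omega> \<partial>M)" for n
  proof -
    have "c * emeasure M (G n) = (\<integral>\<^sup>+\<omega>. c * indicator (G n) \<omega> \<partial>M)"
      by (rule nn_integral_cmult_indicator[symmetric, OF G_M])
    also have "\<dots> \<le> (\<integral>\<^sup>+\<omega>. (if \<exists>t\<le>n. c \<le> Z t \<omega> then c else Z n \<omega>) \<partial>M)"
      by (intro nn_integral_mono) (simp add: G_def indicator_def)
    finally show ?thesis
      using nn_integral_stopped_at_crossing_le by (rule order_trans)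
  qed
  moreover have "{\<omega> \<in> space M. \<exists>n. c \<le> Z n \<omega>} = (\<Union>n. G n)"
    by (auto simp: G_def)
  moreover have "incseq G"
    by (auto simp: incseq_def G_def intro: order_trans)
  then have "emeasure M (\<Union>n. G n) = (SUP n. emeasure M (G n))"
    using G_M by (simp add: SUP_emeasure_incseq image_subset_iff)
  ultimately show ?thesis
    by (simp add: SUP_mult_left_ennreal SUP_least)
qed

end

section \<open>Conditional moments\<close>

lemma nn_integral_add_zero_mean:
  fixes p q :: "'a \<Rightarrow> real"
  assumes [measurable]: "p \<in> borel_measurable M"
    and p_nonneg: "\<And>\<omega>. 0 \<le> p \<omega>" and p_finite: "(\<integral>\<^sup>+\<omega>. ennreal (p \<omega>) \<partial>M) < \<infinity>"
    and q: "integrable M q" "(\<integral>\<omega>. q \<omega> \<partial>M) = 0"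
    and sum_nonneg: "\<And>\<omega>. 0 \<le> p \<omega> + q \<omega>"
  shows "(\<integral>\<^sup>+\<omega>. ennreal (p \<omega> + q \<omega>) \<partial>M) = (\<integral>\<^sup>+\<omega>. ennreal (p \<omega>) \<partial>M)"
proof -
  have p: "integrable M p"
    using p_finite p_nonneg by (intro integrableI_bounded) auto
  have "(\<integral>\<^sup>+\<omega>. ennreal (p \<omega> + q \<omega>) \<partial>M) = ennreal (\<integral>\<omega>. p \<omega> + q \<omega> \<partial>M)"
    using p q sum_nonneg by (intro nn_integral_eq_integral) auto
  also have "\<dots> = ennreal (\<integral>\<omega>. p \<omega> \<partial>M)"
    using p q by simp
  also have "\<dots> = (\<integral>\<^sup>+\<omega>. ennreal (p \<omega>) \<partial>M)"
    using p p_nonneg by (intro nn_integral_eq_integral[symmetric]) auto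
  finally show ?thesis .
qed

lemma nn_integral_le_if_truncations_le:
  fixes f :: "'a \<Rightarrow> ennreal"
  assumes "incseq B" and [measurable]: "\<And>k. B k \<in> sets M" and "space M \<subseteq> (\<Union>k. B k)"
    and [measurable]: "f \<in> borel_measurable M"
    and le: "\<And>k. (\<integral>\<^sup>+\<omega>. f \<omega> * indicator (B k) \<omega> \<partial>M) \<le> c"
  shows "(\<integral>\<^sup>+\<omega>. f \<omega> \<partial>M) \<le> c"
proof -
  have "(\<integral>\<^sup>+\<omega>. f \<omega> \<partial>M) = (\<integral>\<^sup>+\<omega>. (SUP k. f \<omega> * indicator (B k) \<omega>) \<partial>M)"
  proof (rule nn_integral_cong)
    fix \<omega> assume "\<omega> \<in> space M"
    then obtain k where "\<omega> \<in> B k"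
      using assms(3) by blast
    then have "f \<omega> \<le> (SUP k. f \<omega> * indicator (B k) \<omega>)"
      by (intro SUP_upper2[of k]) auto
    moreover have "(SUP k. f \<omega> * indicator (B k) \<omega>) \<le> f \<omega>"
      by (intro SUP_least) (simp add: indicator_def)
    ultimately show "f \<omega> = (SUP k. f \<omega> * indicator (B k) \<omega>)"
      by (rule antisym)
  qed
  also have "\<dots> = (SUP k. \<integral>\<^sup>+\<omega>. f \<omega> * indicator (B k) \<omega> \<partial>M)"
  proof (rule nn_integral_monotone_convergence_SUP)
    show "incseq (\<lambda>k \<omega>. f \<omega> * indicator (B k) \<omega>)"
      using \<open>incseq B\<close> by (auto simp: incseq_def le_fun_def indicator_def mono_def subset_eq)
  qed measurable
  also have "\<dots> \<le> c"
    by (rule SUP_least) (rule le)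
  finally show ?thesis .
qed

lemma (in sigma_finite_subalgebra) nn_integral_mult_centered_sq_le:
  assumes [measurable]: "Z \<in> borel_measurable F" "X \<in> borel_measurable M"
    and Z_nonneg: "\<And>\<omega>. 0 \<le> Z \<omega>"
    and var: "AE \<omega> in M. nn_cond_exp M F (\<lambda>\<omega>. ennreal ((X \<omega> - \<mu>)\<^sup>2)) \<omega> \<le> ennreal v"
  shows "(\<integral>\<^sup>+\<omega>. ennreal (Z \<omega> * (X \<omega> - \<mu>)\<^sup>2) \<partial>M) \<le> (\<integral>\<^sup>+\<omega>. ennreal (Z \<omega> * v) \<partial>M)"
proof -
  have "(\<integral>\<^sup>+\<omega>. ennreal (Z \<omega> * (X \<omega> - \<mu>)\<^sup>2) \<partial>M)
      = (\<integral>\<^sup>+\<omega>. ennreal (Z \<omega>) * ennreal ((X \<omega> - \<mu>)\<^sup>2) \<partial>M)"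
    using Z_nonneg by (simp add: ennreal_mult)
  also have "\<dots> = (\<integral>\<^sup>+\<omega>. ennreal (Z \<omega>) * nn_cond_exp M F (\<lambda>\<omega>. ennreal ((X \<omega> - \<mu>)\<^sup>2)) \<omega> \<partial>M)"
    by (rule nn_cond_exp_intg[symmetric]) measurable
  also have "\<dots> \<le> (\<integral>\<^sup>+\<omega>. ennreal (Z \<omega>) * ennreal v \<partial>M)"
    using var by (intro nn_integral_mono_AE) (auto elim!: eventually_mono intro: mult_left_mono)
  also have "\<dots> = (\<integral>\<^sup>+\<omega>. ennreal (Z \<omega> * v) \<partial>M)"
    using Z_nonneg by (simp add: ennreal_mult')
  finally show ?thesis .
qed

context finite_measure_subalgebra
begin

lemma
  assumes [measurable]: "Z \<in> borel_measurable F" and Z_bound: "\<And>\<omega>. \<bar>Z \<omega>\<bar> \<le> K"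
    and X: "integrable M X" and mean: "AE \<omega> in M. real_cond_exp M F X \<omega> = \<mu>"
  shows integrable_mult_centered: "integrable M (\<lambda>\<omega>. Z \<omega> * (X \<omega> - \<mu>))"
    and integral_mult_centered_eq_0: "(\<integral>\<omega>. Z \<omega> * (X \<omega> - \<mu>) \<partial>M) = 0"
proof -
  have [measurable]: "Z \<in> borel_measurable M"
    by (rule measurable_from_subalg[OF subalg]) measurable
  have [measurable]: "X \<in> borel_measurable M"
    using X by auto
  have Z: "integrable M Z"
    using Z_bound by (intro integrable_const_bound[where B=K]) auto
  have "\<bar>Z \<omega> * X \<omega>\<bar> \<le> \<bar>K * X \<omega>\<bar>" for \<omega>
    unfolding abs_mult by (intro mult_right_mono order_trans[OF Z_bound abs_ge_self]) simp
  then have ZX: "integrable M (\<lambda>\<omega>. Z \<omega> * X \<omega>)"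
    by (intro Bochner_Integration.integrable_bound[OF integrable_mult_right[OF X, of K]]) auto
  show "integrable M (\<lambda>\<omega>. Z \<omega> * (X \<omega> - \<mu>))"
    using Z ZX by (simp add: right_diff_distrib)
  have "(\<integral>\<omega>. Z \<omega> * X \<omega> \<partial>M) = (\<integral>\<omega>. Z \<omega> * real_cond_exp M F X \<omega> \<partial>M)"
    by (rule real_cond_exp_intg(2)[symmetric, OF ZX]) measurable
  also have "\<dots> = (\<integral>\<omega>. Z \<omega> * \<mu> \<partial>M)"
    by (rule integral_cong_AE) (use mean in \<open>auto elim!: eventually_mono\<close>)
  finally show "(\<integral>\<omega>. Z \<omega> * (X \<omega> - \<mu>) \<partial>M) = 0"
    using Z ZX by (simp add: right_diff_distrib)
qed

lemma nn_integral_mult_quadratic_eq: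
  assumes s: "\<bar>s\<bar> = 1"
    and [measurable]: "b \<in> borel_measurable F" "l \<in> borel_measurable F"
    and b_nonneg: "\<And>\<omega>. 0 \<le> b \<omega>" and bl_bound: "\<And>\<omega>. \<bar>b \<omega> * l \<omega>\<bar> \<le> K"
    and X: "integrable M X" and mean: "AE \<omega> in M. real_cond_exp M F X \<omega> = \<mu>"
    and finite: "(\<integral>\<^sup>+\<omega>. ennreal (b \<omega> * (1 + (l \<omega>)\<^sup>2 * (X \<omega> - \<mu>)\<^sup>2 / 3)) \<partial>M) < \<infinity>"
  shows "(\<integral>\<^sup>+\<omega>. ennreal (b \<omega> * (1 + s * l \<omega> * (X \<omega> - \<mu>) + (l \<omega>)\<^sup>2 * (X \<omega> - \<mu>)\<^sup>2 / 3)) \<partial>M)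
     = (\<integral>\<^sup>+\<omega>. ennreal (b \<omega> * (1 + (l \<omega>)\<^sup>2 * (X \<omega> - \<mu>)\<^sup>2 / 3)) \<partial>M)"
proof -
  have [measurable]: "b \<in> borel_measurable M" "l \<in> borel_measurable M"
    by (rule measurable_from_subalg[OF subalg], measurable)+
  have [measurable]: "X \<in> borel_measurable M"
    using X by auto
  define p where "p \<omega> = b \<omega> * (1 + (l \<omega>)\<^sup>2 * (X \<omega> - \<mu>)\<^sup>2 / 3)" for \<omega>
  define q where "q \<omega> = s * b \<omega> * l \<omega> * (X \<omega> - \<mu>)" for \<omega>
  have p_meas: "p \<in> borel_measurable M"
    unfolding p_def by measurable
  have "\<bar>s * b \<omega> * l \<omega>\<bar> \<le> K" for \<omega>
    using s bl_bound[of \<omega>] by (simp add: abs_mult)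
  then have q: "integrable M q" "(\<integral>\<omega>. q \<omega> \<partial>M) = 0"
    unfolding q_def using X mean
    by (intro integrable_mult_centered integral_mult_centered_eq_0, measurable)+
  have "0 \<le> p \<omega> + q \<omega>" for \<omega>
  proof -
    define y where "y = s * (l \<omega> * (X \<omega> - \<mu>))"
    have y2: "y\<^sup>2 = (l \<omega>)\<^sup>2 * (X \<omega> - \<mu>)\<^sup>2"
      unfolding y_def power2_mult_abs_one[OF s] by (simp add: power_mult_distrib)
    have "p \<omega> + q \<omega> = b \<omega> * (1 + y + y\<^sup>2 / 3)"
      unfolding p_def q_def y2 by (simp add: y_def algebra_simps)
    then show ?thesis
      using b_nonneg[of \<omega>] one_plus_quadratic_pos[of y] by simp
  qed
  then have "(\<integral>\<^sup>+\<omega>. ennreal (p \<omega> + q \<omega>) \<partial>M) = (\<integral>\<^sup>+\<omega>. ennreal (p \<omega>) \<partial>M)"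
    using b_nonneg finite q by (intro nn_integral_add_zero_mean[OF p_meas]) (auto simp: p_def)
  moreover have "p \<omega> + q \<omega> = b \<omega> * (1 + s * l \<omega> * (X \<omega> - \<mu>) + (l \<omega>)\<^sup>2 * (X \<omega> - \<mu>)\<^sup>2 / 3)" for \<omega>
    by (simp add: p_def q_def algebra_simps)
  ultimately show ?thesis
    by (simp add: p_def)
qed

lemma nn_integral_mult_quadratic_le_bounded:
  assumes s: "\<bar>s\<bar> = 1"
    and [measurable]: "b \<in> borel_measurable F" "l \<in> borel_measurable F"
    and b_nonneg: "\<And>\<omega>. 0 \<le> b \<omega>" and bl_bound: "\<And>\<omega>. \<bar>b \<omega> * l \<omega>\<bar> \<le> K"
    and X: "integrable M X" and mean: "AE \<omega> in M. real_cond_exp M F X \<omega> = \<mu>"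
    and var: "AE \<omega> in M. nn_cond_exp M F (\<lambda>\<omega>. ennreal ((X \<omega> - \<mu>)\<^sup>2)) \<omega> \<le> ennreal (\<sigma>\<^sup>2)"
  shows "(\<integral>\<^sup>+\<omega>. ennreal (b \<omega> * (1 + s * l \<omega> * (X \<omega> - \<mu>) + (l \<omega>)\<^sup>2 * (X \<omega> - \<mu>)\<^sup>2 / 3)) \<partial>M)
     \<le> (\<integral>\<^sup>+\<omega>. ennreal (b \<omega> * (1 + (l \<omega>)\<^sup>2 * \<sigma>\<^sup>2 / 3)) \<partial>M)" (is "_ \<le> ?R")
proof -
  have [measurable]: "b \<in> borel_measurable M"
    by (rule measurable_from_subalg[OF subalg]) measurable
  have [measurable]: "X \<in> borel_measurable M"
    using X by auto
  define c where "c \<omega> = b \<omega> * (l \<omega>)\<^sup>2 / 3" for \<omega>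
  have c_nonneg: "0 \<le> c \<omega>" for \<omega>
    using b_nonneg by (simp add: c_def)
  have c_F: "c \<in> borel_measurable F"
    unfolding c_def by measurable
  have [measurable]: "c \<in> borel_measurable M"
    by (rule measurable_from_subalg[OF subalg c_F])
  have "(\<integral>\<^sup>+\<omega>. ennreal (b \<omega> * (1 + (l \<omega>)\<^sup>2 * (X \<omega> - \<mu>)\<^sup>2 / 3)) \<partial>M)
      = (\<integral>\<^sup>+\<omega>. ennreal (b \<omega>) + ennreal (c \<omega> * (X \<omega> - \<mu>)\<^sup>2) \<partial>M)"
    using b_nonneg c_nonneg by (intro nn_integral_cong) (simp add: c_def algebra_simps flip: ennreal_plus)
  also have "\<dots> = (\<integral>\<^sup>+\<omega>. ennreal (b \<omega>) \<partial>M) + (\<integral>\<^sup>+\<omega>. ennreal (c \<omega> * (X \<omega> - \<mu>)\<^sup>2) \<partial>M)"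
    by (rule nn_integral_add) measurable
  also have "\<dots> \<le> (\<integral>\<^sup>+\<omega>. ennreal (b \<omega>) \<partial>M) + (\<integral>\<^sup>+\<omega>. ennreal (c \<omega> * \<sigma>\<^sup>2) \<partial>M)"
    using c_nonneg var by (intro add_left_mono nn_integral_mult_centered_sq_le[OF c_F]) auto
  also have "\<dots> = (\<integral>\<^sup>+\<omega>. ennreal (b \<omega>) + ennreal (c \<omega> * \<sigma>\<^sup>2) \<partial>M)"
    by (rule nn_integral_add[symmetric]) measurable
  also have "\<dots> = ?R"
    using b_nonneg c_nonneg by (intro nn_integral_cong) (simp add: c_def algebra_simps flip: ennreal_plus)
  finally have le: "(\<integral>\<^sup>+\<omega>. ennreal (b \<omega> * (1 + (l \<omega>)\<^sup>2 * (X \<omega> - \<mu>)\<^sup>2 / 3)) \<partial>M) \<le> ?R" .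
  show ?thesis
  proof (cases "?R = \<infinity>")
    case False
    then show ?thesis
      using le nn_integral_mult_quadratic_eq[OF s _ _ b_nonneg bl_bound X mean]
      by (simp add: le_less_trans less_top)
  qed simp
qed


lemma nn_integral_mult_quadratic_le:
  assumes s: "\<bar>s\<bar> = 1"
    and [measurable]: "b \<in> borel_measurable F" "l \<in> borel_measurable F"
    and b_nonneg: "\<And>\<omega>. 0 \<le> b \<omega>"
    and X: "integrable M X" and mean: "AE \<omega> in M. real_cond_exp M F X \<omega> = \<mu>"
    and var: "AE \<omega> in M. nn_cond_exp M F (\<lambda>\<omega>. ennreal ((X \<omega> - \<mu>)\<^sup>2)) \<omega> \<le> ennreal (\<sigma>\<^sup>2)"
  shows "(\<integral>\<^sup>+\<omega>. ennreal (b \<omega> * (1 + s * l \<omega> * (X \<omega> - \<mu>) + (l \<omega>)\<^sup>2 * (X \<omega> - \<mu>)\<^sup>2 / 3)) \<partial>M)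
     \<le> (\<integral>\<^sup>+\<omega>. ennreal (b \<omega> * (1 + (l \<omega>)\<^sup>2 * \<sigma>\<^sup>2 / 3)) \<partial>M)"
proof -
  \<comment> \<open>On \<open>B k\<close> the coefficient \<open>b l\<close> of the linear term is bounded, so that term has mean
    zero there; monotone convergence in \<open>k\<close> removes the truncation.\<close>
  define B where "B k = {\<omega> \<in> space M. b \<omega> * \<bar>l \<omega>\<bar> \<le> real k}" for k :: nat
  have [measurable]: "b \<in> borel_measurable M" "l \<in> borel_measurable M"
    by (rule measurable_from_subalg[OF subalg], measurable)+
  have [measurable]: "X \<in> borel_measurable M"
    using X by auto
  have B_F [measurable]: "B k \<in> sets F" for k
  proof -
    have "B k = {\<omega> \<in> space F. b \<omega> * \<bar>l \<omega>\<bar> \<le> real k}"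
      using subalg by (simp add: B_def subalgebra_def)
    then show ?thesis
      by simp
  qed
  have [measurable]: "B k \<in> sets M" for k
    using B_F subalg by (auto simp: subalgebra_def)
  show ?thesis
  proof (rule nn_integral_le_if_truncations_le[where B=B])
    show "incseq B"
      by (auto simp: incseq_def B_def)
    show "space M \<subseteq> (\<Union>k. B k)"
      using real_arch_simple by (auto simp: B_def)
    fix k
    have b_meas: "(\<lambda>\<omega>. indicator (B k) \<omega> * b \<omega>) \<in> borel_measurable F"
      by measurable
    have "(\<integral>\<^sup>+\<omega>. ennreal (b \<omega> * (1 + s * l \<omega> * (X \<omega> - \<mu>) + (l \<omega>)\<^sup>2 * (X \<omega> - \<mu>)\<^sup>2 / 3))
          * indicator (B k) \<omega> \<partial>M)
        = (\<integral>\<^sup>+\<omega>. ennreal (indicator (B k) \<omega> * b \<omega>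
          * (1 + s * l \<omega> * (X \<omega> - \<mu>) + (l \<omega>)\<^sup>2 * (X \<omega> - \<mu>)\<^sup>2 / 3)) \<partial>M)"
      by (intro nn_integral_cong) (simp add: indicator_def)
    also have "\<dots> \<le> (\<integral>\<^sup>+\<omega>. ennreal (indicator (B k) \<omega> * b \<omega> * (1 + (l \<omega>)\<^sup>2 * \<sigma>\<^sup>2 / 3)) \<partial>M)"
      by (rule nn_integral_mult_quadratic_le_bounded[OF s b_meas _ _ _ X mean var, where K="real k"])
         (use b_nonneg in \<open>auto simp: B_def indicator_def abs_mult\<close>)
    also have "\<dots> \<le> (\<integral>\<^sup>+\<omega>. ennreal (b \<omega> * (1 + (l \<omega>)\<^sup>2 * \<sigma>\<^sup>2 / 3)) \<partial>M)"
      using b_nonneg by (intro nn_integral_mono ennreal_leI) (simp add: indicator_def)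
    finally show "(\<integral>\<^sup>+\<omega>. ennreal (b \<omega> * (1 + s * l \<omega> * (X \<omega> - \<mu>) + (l \<omega>)\<^sup>2 * (X \<omega> - \<mu>)\<^sup>2 / 3))
          * indicator (B k) \<omega> \<partial>M)
        \<le> (\<integral>\<^sup>+\<omega>. ennreal (b \<omega> * (1 + (l \<omega>)\<^sup>2 * \<sigma>\<^sup>2 / 3)) \<partial>M)" .
  qed measurable
qed

end

section \<open>The self-normalized increments\<close>

definition sn_increment :: "real \<Rightarrow> real \<Rightarrow> real \<Rightarrow> real \<Rightarrow> real \<Rightarrow> real" where
  "sn_increment s \<sigma> \<mu> l x = s * l * (x - \<mu>) - l\<^sup>2 * ((x - \<mu>)\<^sup>2 + 2 * \<sigma>\<^sup>2) / 6"

definition sn_sum :: "real \<Rightarrow> real \<Rightarrow> real \<Rightarrow> (nat \<Rightarrow> real) \<Rightarrow> (nat \<Rightarrow> real) \<Rightarrow> nat \<Rightarrow> real" where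
  "sn_sum s \<sigma> \<mu> lm x t = (\<Sum>i=1..t. sn_increment s \<sigma> \<mu> (lm i) (x i))"

lemma exp_sn_increment_le:
  assumes "\<bar>s\<bar> = 1"
  shows "exp (sn_increment s \<sigma> \<mu> l x)
    \<le> exp (- l\<^sup>2 * \<sigma>\<^sup>2 / 3) * (1 + s * l * (x - \<mu>) + l\<^sup>2 * (x - \<mu>)\<^sup>2 / 3)"
proof -
  define y where "y = s * l * (x - \<mu>)"
  have y2: "y\<^sup>2 = l\<^sup>2 * (x - \<mu>)\<^sup>2"
    unfolding y_def mult.assoc power2_mult_abs_one[OF assms] by (simp add: power_mult_distrib)
  have "sn_increment s \<sigma> \<mu> l x = (y - y\<^sup>2 / 6) + (- l\<^sup>2 * \<sigma>\<^sup>2 / 3)"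
    unfolding sn_increment_def y2 by (simp add: y_def algebra_simps add_divide_distrib)
  then have "exp (sn_increment s \<sigma> \<mu> l x) = exp (y - y\<^sup>2 / 6) * exp (- l\<^sup>2 * \<sigma>\<^sup>2 / 3)"
    by (simp only: exp_add)
  also have "\<dots> \<le> (1 + y + y\<^sup>2 / 3) * exp (- l\<^sup>2 * \<sigma>\<^sup>2 / 3)"
    by (simp add: exp_le_one_plus_quadratic)
  finally show ?thesis
    unfolding y2 by (simp add: y_def mult.commute)
qed

context finite_measure_subalgebra
begin

lemma nn_integral_mult_exp_sn_increment_le:
  assumes s: "\<bar>s\<bar> = 1"
    and [measurable]: "h \<in> borel_measurable F" "l \<in> borel_measurable F"
    and h_nonneg: "\<And>\<omega>. 0 \<le> h \<omega>"
    and X: "integrable M X" and mean: "AE \<omega> in M. real_cond_exp M F X \<omega> = \<mu>"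
    and var: "AE \<omega> in M. nn_cond_exp M F (\<lambda>\<omega>. ennreal ((X \<omega> - \<mu>)\<^sup>2)) \<omega> \<le> ennreal (\<sigma>\<^sup>2)"
  shows "(\<integral>\<^sup>+\<omega>. ennreal (h \<omega> * exp (sn_increment s \<sigma> \<mu> (l \<omega>) (X \<omega>))) \<partial>M) \<le> (\<integral>\<^sup>+\<omega>. ennreal (h \<omega>) \<partial>M)"
proof -
  define g where "g \<omega> = h \<omega> * exp (- (l \<omega>)\<^sup>2 * \<sigma>\<^sup>2 / 3)" for \<omega>
  have g_meas: "g \<in> borel_measurable F"
    unfolding g_def by measurable
  have "(\<integral>\<^sup>+\<omega>. ennreal (h \<omega> * exp (sn_increment s \<sigma> \<mu> (l \<omega>) (X \<omega>))) \<partial>M)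
      \<le> (\<integral>\<^sup>+\<omega>. ennreal (g \<omega> * (1 + s * l \<omega> * (X \<omega> - \<mu>) + (l \<omega>)\<^sup>2 * (X \<omega> - \<mu>)\<^sup>2 / 3)) \<partial>M)"
    using exp_sn_increment_le[OF s] h_nonneg
    by (intro nn_integral_mono ennreal_leI) (simp add: g_def mult_left_mono mult.assoc)
  also have "\<dots> \<le> (\<integral>\<^sup>+\<omega>. ennreal (g \<omega> * (1 + (l \<omega>)\<^sup>2 * \<sigma>\<^sup>2 / 3)) \<partial>M)"
    using h_nonneg by (intro nn_integral_mult_quadratic_le[OF s g_meas _ _ X mean var]) (simp_all add: g_def)
  also have "\<dots> \<le> (\<integral>\<^sup>+\<omega>. ennreal (h \<omega>) \<partial>M)"
  proof (intro nn_integral_mono ennreal_leI)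
    fix \<omega>
    have "h \<omega> * (exp (- ((l \<omega>)\<^sup>2 * \<sigma>\<^sup>2 / 3)) * (1 + (l \<omega>)\<^sup>2 * \<sigma>\<^sup>2 / 3)) \<le> h \<omega>"
      by (intro mult_left_le exp_neg_mult_one_plus_le_1 h_nonneg)
    then show "g \<omega> * (1 + (l \<omega>)\<^sup>2 * \<sigma>\<^sup>2 / 3) \<le> h \<omega>"
      by (simp add: g_def mult.assoc)
  qed
  finally show ?thesis .
qed

end

lemma sn_sum_expand:
  "sn_sum s \<sigma> \<mu> lm x t =
     s * (\<Sum>i=1..t. lm i * x i) - s * \<mu> * (\<Sum>i=1..t. lm i)
     - ((\<Sum>i=1..t. (lm i)\<^sup>2 * (x i)\<^sup>2) - 2 * \<mu> * (\<Sum>i=1..t. (lm i)\<^sup>2 * x i)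
        + (\<mu>\<^sup>2 + 2 * \<sigma>\<^sup>2) * (\<Sum>i=1..t. (lm i)\<^sup>2)) / 6"
proof -
  have "sn_increment s \<sigma> \<mu> (lm i) (x i) =
     s * (lm i * x i) - s * \<mu> * lm i - (lm i)\<^sup>2 * (x i)\<^sup>2 / 6 + \<mu> / 3 * ((lm i)\<^sup>2 * x i)
     - (\<mu>\<^sup>2 + 2 * \<sigma>\<^sup>2) / 6 * (lm i)\<^sup>2" for i
    by (simp add: sn_increment_def power2_eq_square field_simps)
  then have "sn_sum s \<sigma> \<mu> lm x t =
     s * (\<Sum>i=1..t. lm i * x i) - s * \<mu> * (\<Sum>i=1..t. lm i) - (\<Sum>i=1..t. (lm i)\<^sup>2 * (x i)\<^sup>2) / 6
     + \<mu> / 3 * (\<Sum>i=1..t. (lm i)\<^sup>2 * x i) - (\<mu>\<^sup>2 + 2 * \<sigma>\<^sup>2) / 6 * (\<Sum>i=1..t. (lm i)\<^sup>2)"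
    by (simp add: sn_sum_def sum_subtractf sum.distrib sum_distrib_left sum_divide_distrib)
  then show ?thesis
    by (simp add: field_simps)
qed

lemma sq_dist_minus_D_SN:
  "((\<Sum>i=1..t. (lm i)\<^sup>2) / 3 * \<mu> - U_SN s lm x t)\<^sup>2 - D_SN a \<sigma> s lm x t
     = 2 * (\<Sum>i=1..t. (lm i)\<^sup>2) / 3 * (ln (2 / a) - sn_sum s \<sigma> \<mu> lm x t)"
proof -
  have "(L / 3 * \<mu> - (E / 3 - s * B))\<^sup>2
      - ((E / 3 - s * B)\<^sup>2 - 2 * L / 3 * (c - s * A + (Q + 2 * \<sigma>\<^sup>2 * L) / 6))
    = 2 * L / 3 * (c - (s * A - s * \<mu> * B - (Q - 2 * \<mu> * E + (\<mu>\<^sup>2 + 2 * \<sigma>\<^sup>2) * L) / 6))"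
    for L E B A Q c :: real
    by (simp add: power2_eq_square field_simps)
  then show ?thesis
    unfolding D_SN_def U_SN_def sn_sum_expand .
qed

lemma sn_sum_gt_if_mem_aCI_SN:
  assumes "\<mu> \<in> aCI_SN a \<sigma> s lm x t"
  shows "ln (2 / a) < sn_sum s \<sigma> \<mu> lm x t"
proof -
  define L where "L = (\<Sum>i=1..t. (lm i)\<^sup>2)"
  define U where "U = U_SN s lm x t"
  define D where "D = D_SN a \<sigma> s lm x t"
  have mem: "0 \<le> D" "(U - sqrt D) / (L / 3) < \<mu>" "\<mu> < (U + sqrt D) / (L / 3)"
    using assms unfolding aCI_SN_def U_def D_def L_def by (auto split: if_splits)
  have "L \<noteq> 0"
    \<comment> \<open>for \<open>L = 0\<close> both endpoints are \<open>x / 0 = 0\<close>, so the interval is empty\<close>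
    using mem by auto
  then have L: "0 < L"
    unfolding L_def by (metis sum_nonneg zero_le_power2 order_le_neq_trans)
  then have "\<bar>L / 3 * \<mu> - U\<bar> < sqrt D"
    using mem by (simp add: field_simps abs_less_iff)
  then have "(L / 3 * \<mu> - U)\<^sup>2 < D"
    using mem(1) by (metis abs_ge_zero power2_abs real_sqrt_pow2 power_strict_mono zero_less_numeral)
  then have "2 * L / 3 * (ln (2 / a) - sn_sum s \<sigma> \<mu> lm x t) < 0"
    using sq_dist_minus_D_SN[of lm t \<mu> s x a \<sigma>] unfolding L_def U_def D_def by linarith
  then show ?thesis
    using L by (simp add: mult_less_0_iff)
qed

lemma mem_CI_SN_if_sn_sums_less:
  assumes "sn_sum 1 \<sigma> \<mu> lm x t < ln (2 / a)" "sn_sum (-1) \<sigma> \<mu> lm x t < ln (2 / a)"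
  shows "\<mu> \<in> CI_SN a \<sigma> lm x t"
  using assms sn_sum_gt_if_mem_aCI_SN[of \<mu> a \<sigma> 1 lm x t] sn_sum_gt_if_mem_aCI_SN[of \<mu> a \<sigma> "-1" lm x t]
  unfolding CI_SN_def by auto

section \<open>The confidence sequence\<close>

locale cond_moment_process = prob_space M
  for M :: "'a measure" and F :: "nat \<Rightarrow> 'a measure"
    and X lam :: "nat \<Rightarrow> 'a \<Rightarrow> real" and \<mu> \<sigma> :: real +
  assumes subalg: "\<And>t. subalgebra M (F t)"
    and filt: "\<And>s t. s \<le> t \<Longrightarrow> sets (F s) \<subseteq> sets (F t)"
    and adapted: "\<And>t. t \<ge> 1 \<Longrightarrow> X t \<in> borel_measurable (F t)"
    and integ: "\<And>t. t \<ge> 1 \<Longrightarrow> integrable M (X t)"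
    and mean: "\<And>t. t \<ge> 1 \<Longrightarrow> AE \<omega> in M. real_cond_exp M (F (t - 1)) (X t) \<omega> = \<mu>"
    and var: "\<And>t. t \<ge> 1 \<Longrightarrow>
       AE \<omega> in M. nn_cond_exp M (F (t - 1)) (\<lambda>\<omega>. ennreal ((X t \<omega> - \<mu>)\<^sup>2)) \<omega> \<le> ennreal (\<sigma>\<^sup>2)"
    and predictable: "\<And>t. t \<ge> 1 \<Longrightarrow> lam t \<in> borel_measurable (F (t - 1))"
begin

lemma lam_measurable_F:
  assumes "1 \<le> i" "i \<le> Suc n"
  shows "lam i \<in> borel_measurable (F n)"
  using assms by (intro measurable_filtration_mono[where F=F, OF subalg filt[of "i - 1"] predictable]) auto

lemma X_measurable_F:
  assumes "1 \<le> i" "i \<le> n"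
  shows "X i \<in> borel_measurable (F n)"
  using assms by (intro measurable_filtration_mono[where F=F, OF subalg filt[of i] adapted]) auto

lemma borel_measurable_sn_sum:
  "(\<lambda>\<omega>. sn_sum s \<sigma> \<mu> (\<lambda>i. lam i \<omega>) (\<lambda>i. X i \<omega>) n) \<in> borel_measurable (F n)"
proof -
  have [measurable]: "lam i \<in> borel_measurable (F n)" "X i \<in> borel_measurable (F n)"
    if "i \<in> {1..n}" for i
    using that lam_measurable_F X_measurable_F by auto
  show ?thesis
    unfolding sn_sum_def sn_increment_def by measurable
qed

lemma borel_measurable_sn_sum_M [measurable]:
  "(\<lambda>\<omega>. sn_sum s \<sigma> \<mu> (\<lambda>i. lam i \<omega>) (\<lambda>i. X i \<omega>) n) \<in> borel_measurable M"
  by (rule measurable_from_subalg[OF subalg borel_measurable_sn_sum])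

lemma nn_supermartingale_exp_sn_sum:
  assumes s: "\<bar>s\<bar> = 1"
  shows "nn_supermartingale M F (\<lambda>n \<omega>. ennreal (exp (sn_sum s \<sigma> \<mu> (\<lambda>i. lam i \<omega>) (\<lambda>i. X i \<omega>) n)))"
  unfolding nn_supermartingale_def
proof (intro conjI allI ballI)
  fix n
  let ?S = "\<lambda>n \<omega>. sn_sum s \<sigma> \<mu> (\<lambda>i. lam i \<omega>) (\<lambda>i. X i \<omega>) n"
  have [measurable]: "?S n \<in> borel_measurable (F n)"
    by (rule borel_measurable_sn_sum)
  then show "(\<lambda>\<omega>. ennreal (exp (?S n \<omega>))) \<in> borel_measurable (F n)"
    by measurable
  fix A assume [measurable]: "A \<in> sets (F n)"
  interpret finite_measure_subalgebra M "F n"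
    by unfold_locales (rule subalg)
  define h where "h \<omega> = indicator A \<omega> * exp (?S n \<omega>)" for \<omega>
  have h: "h \<in> borel_measurable (F n)"
    unfolding h_def by measurable
  have "(\<integral>\<^sup>+\<omega>\<in>A. ennreal (exp (?S (Suc n) \<omega>)) \<partial>M)
      = (\<integral>\<^sup>+\<omega>. ennreal (h \<omega> * exp (sn_increment s \<sigma> \<mu> (lam (Suc n) \<omega>) (X (Suc n) \<omega>))) \<partial>M)"
    by (intro nn_integral_cong) (simp add: h_def sn_sum_def exp_add indicator_def)
  also have "\<dots> \<le> (\<integral>\<^sup>+\<omega>. ennreal (h \<omega>) \<partial>M)"
    using integ[of "Suc n"] mean[of "Suc n"] var[of "Suc n"]
    by (intro nn_integral_mult_exp_sn_increment_le[OF s h lam_measurable_F]) (auto simp: h_def)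
  also have "\<dots> = (\<integral>\<^sup>+\<omega>\<in>A. ennreal (exp (?S n \<omega>)) \<partial>M)"
    by (intro nn_integral_cong) (simp add: h_def indicator_def)
  finally show "(\<integral>\<^sup>+\<omega>\<in>A. ennreal (exp (?S (Suc n) \<omega>)) \<partial>M) \<le> (\<integral>\<^sup>+\<omega>\<in>A. ennreal (exp (?S n \<omega>)) \<partial>M)" .
qed

lemma measure_sn_sum_crossing_le:
  assumes s: "\<bar>s\<bar> = 1" and \<alpha>: "0 < \<alpha>"
  shows "measure M {\<omega> \<in> space M. \<exists>t. ln (2 / \<alpha>) \<le> sn_sum s \<sigma> \<mu> (\<lambda>i. lam i \<omega>) (\<lambda>i. X i \<omega>) t} \<le> \<alpha> / 2"
proof -
  let ?S = "\<lambda>n \<omega>. sn_sum s \<sigma> \<mu> (\<lambda>i. lam i \<omega>) (\<lambda>i. X i \<omega>) n"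
  let ?A = "{\<omega> \<in> space M. \<exists>t. ln (2 / \<alpha>) \<le> ?S t \<omega>}"
  have "ln (2 / \<alpha>) \<le> y \<longleftrightarrow> 2 / \<alpha> \<le> exp y" for y
    using \<alpha> by (metis exp_le_cancel_iff exp_ln zero_less_divide_iff zero_less_numeral)
  then have A_eq: "?A = {\<omega> \<in> space M. \<exists>n. ennreal (2 / \<alpha>) \<le> ennreal (exp (?S n \<omega>))}"
    by simp
  have "ennreal (2 / \<alpha>) * emeasure M ?A \<le> (\<integral>\<^sup>+\<omega>. ennreal (exp (?S 0 \<omega>)) \<partial>M)"
    unfolding A_eq by (rule ville_inequality[OF subalg filt nn_supermartingale_exp_sn_sum[OF s]])
  also have "\<dots> = 1"
    by (simp add: sn_sum_def emeasure_space_1)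
  finally have "ennreal (2 / \<alpha>) * ennreal (measure M ?A) \<le> 1"
    by (simp add: emeasure_eq_measure)
  then have "ennreal (2 / \<alpha> * measure M ?A) \<le> 1"
    using \<alpha> by (subst ennreal_mult) auto
  then have "2 / \<alpha> * measure M ?A \<le> 1"
    by (simp add: ennreal_le_1)
  then show ?thesis
    using \<alpha> by (simp add: field_simps)
qed

lemma sets_all_mem_CI_SN:
  "{\<omega> \<in> space M. \<forall>t\<ge>1. m \<in> CI_SN \<alpha> \<sigma> (\<lambda>i. lam i \<omega>) (\<lambda>i. X i \<omega>) t} \<in> sets M"
proof -
  have [measurable]: "lam i \<in> borel_measurable M" "X i \<in> borel_measurable M" if "1 \<le> i" for i
    using that lam_measurable_F[of i i] X_measurable_F[of i i] measurable_from_subalg[OF subalg] by auto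
  have [measurable]: "(\<lambda>\<omega>. U_SN s (\<lambda>i. lam i \<omega>) (\<lambda>i. X i \<omega>) t) \<in> borel_measurable M"
    "(\<lambda>\<omega>. D_SN \<alpha> \<sigma> s (\<lambda>i. lam i \<omega>) (\<lambda>i. X i \<omega>) t) \<in> borel_measurable M" for s t
    unfolding D_SN_def U_SN_def by measurable measurable
  have "m \<in> aCI_SN \<alpha> \<sigma> s lm x t \<longleftrightarrow> \<not> D_SN \<alpha> \<sigma> s lm x t < 0 \<and>
     (U_SN s lm x t - sqrt (D_SN \<alpha> \<sigma> s lm x t)) / ((\<Sum>i=1..t. (lm i)\<^sup>2) / 3) < m \<and>
     m < (U_SN s lm x t + sqrt (D_SN \<alpha> \<sigma> s lm x t)) / ((\<Sum>i=1..t. (lm i)\<^sup>2) / 3)" for s lm x t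
    by (simp add: aCI_SN_def)
  then show ?thesis
    unfolding CI_SN_def by simp measurable
qed

end

theorem theorem2:
  fixes M :: "'a measure" and F :: "nat \<Rightarrow> 'a measure"
    and X lam :: "nat \<Rightarrow> 'a \<Rightarrow> real" and \<mu> \<sigma> \<alpha> :: real
  assumes "prob_space M"
    and subalg: "\<And>t. subalgebra M (F t)"
    and filt: "\<And>s t. s \<le> t \<Longrightarrow> sets (F s) \<subseteq> sets (F t)"
    and triv: "sets (F 0) = {{}, space M}"
    and adapted: "\<And>t. t \<ge> 1 \<Longrightarrow> X t \<in> borel_measurable (F t)"
    and integ: "\<And>t. t \<ge> 1 \<Longrightarrow> integrable M (X t)"
    and mean: "\<And>t. t \<ge> 1 \<Longrightarrow> AE \<omega> in M. real_cond_exp M (F (t - 1)) (X t) \<omega> = \<mu>"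
    and var: "\<And>t. t \<ge> 1 \<Longrightarrow>
       AE \<omega> in M. nn_cond_exp M (F (t - 1)) (\<lambda>\<omega>. ennreal ((X t \<omega> - \<mu>)\<^sup>2)) \<omega> \<le> ennreal (\<sigma>\<^sup>2)"
    and alpha: "0 < \<alpha>" "\<alpha> < 1"
    and predictable: "\<And>t. t \<ge> 1 \<Longrightarrow> lam t \<in> borel_measurable (F (t - 1))"
  shows "measure M {\<omega> \<in> space M. \<forall>t\<ge>1. \<mu> \<in> CI_SN \<alpha> \<sigma> (\<lambda>i. lam i \<omega>) (\<lambda>i. X i \<omega>) t}
           \<ge> 1 - \<alpha>"
proof -
  interpret cond_moment_process M F X lam \<mu> \<sigma>
    by (intro cond_moment_process.intro cond_moment_process_axioms.intro) fact+
  define bad where "bad s = {\<omega> \<in> space M. \<exists>t. ln (2 / \<alpha>) \<le> sn_sum s \<sigma> \<mu> (\<lambda>i. lam i \<omega>) (\<lambda>i. X i \<omega>) t}" for s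
  have bad_sets: "bad s \<in> sets M" for s
    unfolding bad_def by measurable
  have bad_le: "measure M (bad s) \<le> \<alpha> / 2" if "\<bar>s\<bar> = 1" for s
    unfolding bad_def by (rule measure_sn_sum_crossing_le[OF that alpha(1)])
  have "measure M (bad 1 \<union> bad (-1)) \<le> \<alpha>"
    using bad_le[of 1] bad_le[of "-1"] measure_Un_le[OF bad_sets bad_sets, of 1 "-1"] by simp
  moreover have "space M - (bad 1 \<union> bad (-1)) \<subseteq> {\<omega> \<in> space M. \<forall>t\<ge>1. \<mu> \<in> CI_SN \<alpha> \<sigma> (\<lambda>i. lam i \<omega>) (\<lambda>i. X i \<omega>) t}"
    by (auto simp: bad_def not_le intro!: mem_CI_SN_if_sn_sums_less)
  then have "measure M (space M - (bad 1 \<union> bad (-1)))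
      \<le> measure M {\<omega> \<in> space M. \<forall>t\<ge>1. \<mu> \<in> CI_SN \<alpha> \<sigma> (\<lambda>i. lam i \<omega>) (\<lambda>i. X i \<omega>) t}"
    by (intro finite_measure_mono sets_all_mem_CI_SN)
  ultimately show ?thesis
    using prob_compl[of "bad 1 \<union> bad (-1)"] bad_sets by simp
qed

end
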